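(* Let a Gibbs-type feature model with parameters $(\alpha,\theta)$ be given as a mixture: for $\alpha<0$, $V_{n,k}=\sum_{N\ge1}V^{\mathrm{BB}}_{n,k}(N)\,P_N(\{N\})$ for a probability distribution $P_N$ on $\mathbb N$; for $0\le\alpha<1$, $V_{n,k}=\int_0^\infty V^{\mathrm{IBP}}_{n,k}(\gamma)\,P_\gamma(d\gamma)$ for a probability distribution $P_\gamma$ on $(0,\infty)$. Let $N\sim P_N$ and $\gamma\sim P_\gamma$. Then, as $n\to\infty$: (i) if $\alpha<0$, $K_n\to N$ in distribution; (ii) if $\alpha=0$, $K_n/\log n\to\gamma\theta$ in distribution; (iii) if $0<\alpha<1$, $K_n/n^\alpha\to\gamma\,\Gamma(\theta+1)/\{\alpha\Gamma(\theta+\alpha)\}$ in distribution.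
   Context: Notation: $(x)_m=\Gamma(x+m)/\Gamma(x)$. A feature model on individuals $1,2,\dots$ with $K_n$ the number of distinct features displayed by the first $n$ individuals is a Gibbs-type feature model with parameters $\alpha<1$, $\theta>-\alpha$ if its exchangeable feature probability function (probability of any given ordered feature allocation of $[n]$ into $k$ nonempty sets of sizes $m_1,\dots,m_k$) is $\pi_n(m_1,\dots,m_k)=V_{n,k}\prod_{\ell=1}^k(1-\alpha)_{m_\ell-1}(\theta+\alpha)_{n-m_\ell}$, with consistent nonnegative weights $V_{n,k}$. Let $g_n(\theta,\alpha)=\sum_{i=1}^n\frac{(\theta+\alpha)_{i-1}}{(\theta+1)_{i-1}}$. Indian buffet process (IBP) weights, $\gamma>0$, $0\le\alpha<1$: $V^{\mathrm{IBP}}_{n,k}(\gamma)=\frac1{k!}\{\gamma/(\theta+1)_{n-1}\}^ke^{-\gamma g_n(\theta,\alpha)}$. Beta Bernoulli (BB) weights, $N\in\mathbb N$, $\alpha<0$: $V^{\mathrm{BB}}_{n,k}(N)=\binom Nk\{-\alpha/(\theta+\alpha)_n\}^k\{(\theta+\alpha)_n/(\theta)_n\}^N\mathbf 1\{0\le k\le N\}$. *)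

theory Defs
  imports "HOL-Probability.Probability"
begin

definition g_fun :: "real \<Rightarrow> real \<Rightarrow> nat \<Rightarrow> real" where
  "g_fun \<theta> \<alpha> n = (\<Sum>i=1..n. pochhammer (\<theta> + \<alpha>) (i - 1) / pochhammer (\<theta> + 1) (i - 1))"

definition V_IBP :: "real \<Rightarrow> real \<Rightarrow> nat \<Rightarrow> nat \<Rightarrow> real \<Rightarrow> real" where
  "V_IBP \<theta> \<alpha> n k \<gamma> =
     (1 / fact k) * (\<gamma> / pochhammer (\<theta> + 1) (n - 1)) ^ k * exp (- \<gamma> * g_fun \<theta> \<alpha> n)"

definition V_BB :: "real \<Rightarrow> real \<Rightarrow> nat \<Rightarrow> nat \<Rightarrow> nat \<Rightarrow> real" where
  "V_BB \<theta> \<alpha> n k N =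
     (if k \<le> N then real (N choose k) * (- \<alpha> / pochhammer (\<theta> + \<alpha>) n) ^ k
        * (pochhammer (\<theta> + \<alpha>) n / pochhammer \<theta> n) ^ N else 0)"

definition EFPF :: "(nat \<Rightarrow> nat \<Rightarrow> real) \<Rightarrow> real \<Rightarrow> real \<Rightarrow> nat \<Rightarrow> nat set list \<Rightarrow> real" where
  "EFPF V \<alpha> \<theta> n As = V n (length As) *
     prod_list (map (\<lambda>A. pochhammer (1 - \<alpha>) (card A - 1) * pochhammer (\<theta> + \<alpha>) (n - card A)) As)"

definition ord_feat_allocs :: "nat \<Rightarrow> nat \<Rightarrow> nat set list set" where
  "ord_feat_allocs n k = {As. length As = k \<and> set As \<subseteq> {A. A \<subseteq> {1..n} \<and> A \<noteq> {}}}"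

definition K_prob :: "(nat \<Rightarrow> nat \<Rightarrow> real) \<Rightarrow> real \<Rightarrow> real \<Rightarrow> nat \<Rightarrow> nat \<Rightarrow> real" where
  "K_prob V \<alpha> \<theta> n k = (\<Sum>As\<in>ord_feat_allocs n k. EFPF V \<alpha> \<theta> n As)"

definition K_scaled_law :: "(nat \<Rightarrow> nat \<Rightarrow> real) \<Rightarrow> real \<Rightarrow> real \<Rightarrow> nat \<Rightarrow> real \<Rightarrow> real measure" where
  "K_scaled_law V \<alpha> \<theta> n c =
     distr (density (count_space UNIV) (\<lambda>k::nat. ennreal (K_prob V \<alpha> \<theta> n k))) borel
       (\<lambda>k. real k / c)"

end

theory Submission
  imports Defs "HOL-Real_Asymp.Real_Asymp"
begin

text \<open>Summing the EFPF over the ordered allocations with \<open>k\<close> features gives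
  \<open>P(K_n = k) = V(n,k) * S_n ^ k\<close>, where \<open>S_n\<close> is evaluated by the
  binomial formula for rising factorials. With the mixture representations of \<open>V\<close>, the law of
  \<open>K_n\<close> becomes a mixture over \<open>N\<close> of binomial laws with \<open>N\<close> trials and success
  probability \<open>1 - (\<theta>+\<alpha>)_n / (\<theta>)_n\<close> when \<open>\<alpha> < 0\<close>, and a mixture over \<open>\<gamma>\<close> of
  Poisson laws with mean \<open>\<gamma> * g_n\<close> when \<open>0 \<le> \<alpha>\<close>. The binomial success probability tends
  to 1, and by Chebyshev's inequality a Poisson law concentrates at its mean, which grows like
  \<open>\<gamma> \<theta> log n\<close> resp. \<open>\<gamma> Gamma(\<theta>+1) n powr \<alpha> / (\<alpha> Gamma(\<theta>+\<alpha>))\<close> by the asymptotics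
  of ratios of rising factorials. Dominated convergence over the mixing variable then yields
  convergence of the distribution functions of the rescaled \<open>K_n\<close>.\<close>

section \<open>Distribution of the number of features\<close>

lemma sum_prod_list_lists_of_length:
  fixes w :: "'a \<Rightarrow> 'b::comm_semiring_1"
  assumes "finite F"
  shows "(\<Sum>xs | set xs \<subseteq> F \<and> length xs = k. prod_list (map w xs)) = sum w F ^ k"
proof (induction k)
  case 0
  have "{xs. set xs \<subseteq> F \<and> length xs = 0} = {[]}" by auto
  then show ?case by simp
next
  case (Suc k)
  have "(\<Sum>xs | set xs \<subseteq> F \<and> length xs = Suc k. prod_list (map w xs))
      = (\<Sum>(xs, a) \<in> {xs. set xs \<subseteq> F \<and> length xs = k} \<times> F. w a * prod_list (map w xs))"
    unfolding lists_length_Suc_eq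
    by (subst sum.reindex) (auto simp: inj_split_Cons case_prod_beta)
  also have "\<dots> = (\<Sum>xs | set xs \<subseteq> F \<and> length xs = k. prod_list (map w xs)) * sum w F"
    by (simp add: sum.cartesian_product[symmetric] sum_distrib_left sum_distrib_right mult.commute)
  finally show ?case using Suc by (simp add: mult.commute)
qed

lemma sum_nonempty_subsets_card:
  fixes f :: "nat \<Rightarrow> 'a::semiring_1"
  assumes "finite S"
  shows "(\<Sum>A | A \<subseteq> S \<and> A \<noteq> {}. f (card A)) = (\<Sum>j=1..card S. of_nat (card S choose j) * f j)"
proof -
  let ?F = "{A. A \<subseteq> S \<and> A \<noteq> {}}"
  have "card ` ?F \<subseteq> {1..card S}"
    using assms finite_subset by (fastforce simp: Suc_le_eq card_gt_0_iff card_mono)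
  then have "(\<Sum>A\<in>?F. f (card A)) = (\<Sum>j=1..card S. \<Sum>A | A \<in> ?F \<and> card A = j. f (card A))"
    using assms by (intro sum.group[symmetric]) auto
  also have "\<dots> = (\<Sum>j=1..card S. of_nat (card S choose j) * f j)"
  proof (rule sum.cong[OF refl])
    fix j :: nat assume "j \<in> {1..card S}"
    then have "{A. A \<in> ?F \<and> card A = j} = {A. A \<subseteq> S \<and> card A = j}" by auto
    then show "(\<Sum>A | A \<in> ?F \<and> card A = j. f (card A)) = of_nat (card S choose j) * f j"
      using n_subsets[OF assms, of j] by simp
  qed
  finally show ?thesis .
qed

definition feature_mass :: "real \<Rightarrow> real \<Rightarrow> nat \<Rightarrow> real" where
  "feature_mass \<theta> \<alpha> n =
     (\<Sum>j=1..n. real (n choose j) * pochhammer (1 - \<alpha>) (j - 1) * pochhammer (\<theta> + \<alpha>) (n - j))"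

lemma K_prob_eq_feature_mass: "K_prob V \<alpha> \<theta> n k = V n k * feature_mass \<theta> \<alpha> n ^ k"
proof -
  define F where "F = {A. A \<subseteq> {1..n} \<and> A \<noteq> {}}"
  define w where "w A = pochhammer (1 - \<alpha>) (card A - 1) * pochhammer (\<theta> + \<alpha>) (n - card A)"
    for A :: "nat set"
  have "ord_feat_allocs n k = {xs. set xs \<subseteq> F \<and> length xs = k}"
    unfolding ord_feat_allocs_def F_def by auto
  then have "K_prob V \<alpha> \<theta> n k = V n k * (\<Sum>xs | set xs \<subseteq> F \<and> length xs = k. prod_list (map w xs))"
    unfolding K_prob_def EFPF_def w_def sum_distrib_left by simp
  also have "\<dots> = V n k * sum w F ^ k"
    by (simp add: sum_prod_list_lists_of_length F_def)
  also have "sum w F = feature_mass \<theta> \<alpha> n"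
    using sum_nonempty_subsets_card[of "{1..n}"
        "\<lambda>j. pochhammer (1 - \<alpha>) (j - 1) * pochhammer (\<theta> + \<alpha>) (n - j)"]
    by (simp add: F_def w_def feature_mass_def mult.assoc)
  finally show ?thesis .
qed

lemma feature_mass_closed_form:
  "- \<alpha> * feature_mass \<theta> \<alpha> n = pochhammer \<theta> n - pochhammer (\<theta> + \<alpha>) n"
proof -
  have "pochhammer \<theta> n = (\<Sum>j\<le>n. real (n choose j) * pochhammer (- \<alpha>) j * pochhammer (\<theta> + \<alpha>) (n - j))"
    using pochhammer_binomial_sum[of "- \<alpha>" "\<theta> + \<alpha>" n] by simp
  also have "\<dots> = pochhammer (\<theta> + \<alpha>) n
      + (\<Sum>j=1..n. real (n choose j) * pochhammer (- \<alpha>) j * pochhammer (\<theta> + \<alpha>) (n - j))"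
    by (simp add: atMost_atLeast0 sum.atLeast_Suc_atMost)
  also have "(\<Sum>j=1..n. real (n choose j) * pochhammer (- \<alpha>) j * pochhammer (\<theta> + \<alpha>) (n - j))
      = - \<alpha> * feature_mass \<theta> \<alpha> n"
    unfolding feature_mass_def sum_distrib_left
  proof (rule sum.cong[OF refl])
    fix j assume "j \<in> {1..n}"
    then obtain i where "j = Suc i" by (cases j) auto
    then show "real (n choose j) * pochhammer (- \<alpha>) j * pochhammer (\<theta> + \<alpha>) (n - j)
       = - \<alpha> * (real (n choose j) * pochhammer (1 - \<alpha>) (j - 1) * pochhammer (\<theta> + \<alpha>) (n - j))"
      by (simp add: pochhammer_rec algebra_simps)
  qed
  finally show ?thesis by simp
qed

lemma g_fun_0 [simp]: "g_fun \<theta> \<alpha> 0 = 0"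
  by (simp add: g_fun_def)

lemma g_fun_Suc: "g_fun \<theta> \<alpha> (Suc n) = g_fun \<theta> \<alpha> n + pochhammer (\<theta> + \<alpha>) n / pochhammer (\<theta> + 1) n"
  by (simp add: g_fun_def)

lemma g_fun_closed_form:
  assumes "\<theta> + 1 > 0"
  shows "\<alpha> * g_fun \<theta> \<alpha> n * pochhammer (\<theta> + 1) n
           = (\<theta> + n) * pochhammer (\<theta> + \<alpha>) n - \<theta> * pochhammer (\<theta> + 1) n"
proof (induction n)
  case (Suc n)
  have "pochhammer (\<theta> + 1) n > 0"
    using assms by (rule pochhammer_pos)
  then have "\<alpha> * g_fun \<theta> \<alpha> (Suc n) * pochhammer (\<theta> + 1) (Suc n)
      = (\<alpha> * g_fun \<theta> \<alpha> n * pochhammer (\<theta> + 1) n + \<alpha> * pochhammer (\<theta> + \<alpha>) n) * (\<theta> + 1 + n)"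
    by (simp add: g_fun_Suc pochhammer_Suc field_simps)
  also have "\<dots> = (\<theta> + Suc n) * pochhammer (\<theta> + \<alpha>) (Suc n) - \<theta> * pochhammer (\<theta> + 1) (Suc n)"
    unfolding Suc.IH by (simp add: pochhammer_Suc algebra_simps)
  finally show ?case .
qed simp

lemma feature_mass_eq_g_fun:
  assumes "\<theta> + 1 > 0"
  shows "feature_mass \<theta> \<alpha> (Suc m) = g_fun \<theta> \<alpha> (Suc m) * pochhammer (\<theta> + 1) m"
proof -
  define h where "h = (\<lambda>a. feature_mass \<theta> a (Suc m) - g_fun \<theta> a (Suc m) * pochhammer (\<theta> + 1) m)"
  have h_eq_0: "h a = 0" if "a \<noteq> 0" for a
  proof -
    have "pochhammer (\<theta> + 1) (Suc m) = pochhammer (\<theta> + 1) m * (\<theta> + Suc m)"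
      by (simp add: pochhammer_Suc algebra_simps)
    then have "a * (\<theta> + Suc m) * h a = 0"
      using feature_mass_closed_form[of a \<theta> "Suc m"] g_fun_closed_form[OF assms, of a "Suc m"]
      by (simp add: h_def pochhammer_rec algebra_simps)
    with that assms show ?thesis by simp
  qed
  text \<open>Both sides are polynomials in \<open>\<alpha>\<close>, so the identity extends to \<open>\<alpha> = 0\<close> by continuity.\<close>
  have "continuous_on UNIV h"
    unfolding h_def feature_mass_def g_fun_def divide_inverse by (intro continuous_intros)
  then have "h \<midarrow>\<alpha>\<rightarrow> h \<alpha>"
    by (simp add: continuous_on_def)
  moreover have "h \<midarrow>\<alpha>\<rightarrow> 0"
    by (intro tendsto_eventually eventually_mono[OF eventually_neq_at_within[of 0]] h_eq_0)
  ultimately show ?thesis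
    using LIM_unique by (fastforce simp: h_def)
qed

section \<open>Concentration of Poisson weights\<close>

lemma finite_nat_real_le [simp]: "finite {k::nat. real k \<le> y}"
  by (rule finite_subset[of _ "{..nat \<lceil>y\<rceil>}"]) (auto, linarith)

text \<open>Unlike \<open>poisson_pmf\<close>, which is only specified for a positive rate, this is defined
  for every rate.\<close>
definition poisson_weight :: "real \<Rightarrow> nat \<Rightarrow> real" where
  "poisson_weight l k = l ^ k / fact k * exp (- l)"

lemma poisson_weight_nonneg: "l \<ge> 0 \<Longrightarrow> poisson_weight l k \<ge> 0"
  by (simp add: poisson_weight_def)

lemma sums_poisson_weight: "(\<lambda>k. poisson_weight l k) sums 1"
proof -
  have "(\<lambda>k. l ^ k / fact k * exp (- l)) sums (exp l * exp (- l))"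
    using exp_converges[of l] by (intro sums_mult2) (simp add: divide_inverse mult.commute)
  then show ?thesis by (simp add: poisson_weight_def exp_minus)
qed

lemma sum_poisson_weight_le_1:
  assumes "l \<ge> 0" "finite A"
  shows "(\<Sum>k\<in>A. poisson_weight l k) \<le> 1"
  using sum_le_suminf[OF sums_summable[OF sums_poisson_weight] assms(2)]
    poisson_weight_nonneg[OF assms(1)] sums_unique[OF sums_poisson_weight]
  by simp

lemma sums_poisson_weight_binomial_moment:
  "(\<lambda>k. real (k choose j) * poisson_weight l k) sums (l ^ j / fact j)"
proof -
  have "real ((i + j) choose j) * poisson_weight l (i + j) = l ^ j / fact j * poisson_weight l i" for i
    by (simp add: binomial_fact poisson_weight_def power_add field_simps)
  moreover have "(\<lambda>i. l ^ j / fact j * poisson_weight l i) sums (l ^ j / fact j)"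
    using sums_mult[OF sums_poisson_weight, of "l ^ j / fact j"] by simp
  ultimately have "(\<lambda>i. real ((i + j) choose j) * poisson_weight l (i + j)) sums (l ^ j / fact j)"
    by simp
  moreover have "(\<Sum>i<j. real (i choose j) * poisson_weight l i) = 0"
    by (rule sum.neutral) simp
  ultimately show ?thesis
    using sums_iff_shift[of "\<lambda>k. real (k choose j) * poisson_weight l k" j] by simp
qed

lemma sums_poisson_weight_variance: "(\<lambda>k. (real k - l)\<^sup>2 * poisson_weight l k) sums l"
proof -
  have choose_2: "2 * real (k choose 2) = real k * (real k - 1)" for k
    by (induction k) (simp_all add: numeral_2_eq_2 algebra_simps)
  have "(real k - l)\<^sup>2 = 2 * real (k choose 2) + (1 - 2 * l) * real (k choose 1) + l\<^sup>2" for k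
    unfolding choose_2 by (simp add: power2_eq_square algebra_simps)
  moreover have "(\<lambda>k. 2 * (real (k choose 2) * poisson_weight l k)
      + (1 - 2 * l) * (real (k choose 1) * poisson_weight l k) + l\<^sup>2 * poisson_weight l k)
      sums (2 * (l ^ 2 / fact 2) + (1 - 2 * l) * (l ^ 1 / fact 1) + l\<^sup>2 * 1)"
    by (intro sums_add sums_mult sums_poisson_weight sums_poisson_weight_binomial_moment)
  ultimately show ?thesis
    by (simp add: algebra_simps power2_eq_square)
qed

lemma sum_poisson_weight_le_Chebyshev:
  assumes l: "l \<ge> 0" and d: "d > 0" and "finite A" and far: "\<And>k. k \<in> A \<Longrightarrow> d \<le> \<bar>real k - l\<bar>"
  shows "(\<Sum>k\<in>A. poisson_weight l k) \<le> l / d\<^sup>2"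
proof -
  have "(\<Sum>k\<in>A. poisson_weight l k) \<le> (\<Sum>k\<in>A. (real k - l)\<^sup>2 / d\<^sup>2 * poisson_weight l k)"
  proof (rule sum_mono)
    fix k assume "k \<in> A"
    then have "d\<^sup>2 \<le> (real k - l)\<^sup>2"
      using far d by (metis abs_le_square_iff abs_of_pos)
    then have "d\<^sup>2 * poisson_weight l k \<le> (real k - l)\<^sup>2 * poisson_weight l k"
      using poisson_weight_nonneg[OF l] by (rule mult_right_mono)
    then show "poisson_weight l k \<le> (real k - l)\<^sup>2 / d\<^sup>2 * poisson_weight l k"
      using d by (simp add: le_divide_eq mult.commute)
  qed
  also have "\<dots> = (\<Sum>k\<in>A. (real k - l)\<^sup>2 * poisson_weight l k) / d\<^sup>2"
    by (simp add: sum_divide_distrib)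
  also have "\<dots> \<le> l / d\<^sup>2"
    using sum_le_suminf[OF sums_summable[OF sums_poisson_weight_variance] \<open>finite A\<close>]
      sums_unique[OF sums_poisson_weight_variance] poisson_weight_nonneg[OF l]
    by (intro divide_right_mono) auto
  finally show ?thesis .
qed

lemma sum_poisson_weight_ge_Chebyshev:
  assumes l: "l \<ge> 0" and d: "d > 0" and "finite A" and far: "\<And>k. k \<notin> A \<Longrightarrow> d \<le> \<bar>real k - l\<bar>"
  shows "1 - l / d\<^sup>2 \<le> (\<Sum>k\<in>A. poisson_weight l k)"
proof -
  define f where "f k = ((real k - l)\<^sup>2 / d\<^sup>2 - 1) * poisson_weight l k" for k
  have f_sums: "f sums (l / d\<^sup>2 - 1)"
    unfolding f_def using sums_diff[OF sums_divide[OF sums_poisson_weight_variance] sums_poisson_weight]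
    by (simp add: algebra_simps)
  have "(\<Sum>k\<in>A. f k) \<le> l / d\<^sup>2 - 1"
  proof (rule sum_le_suminf[OF sums_summable[OF f_sums] \<open>finite A\<close>, THEN order_trans])
    fix k assume "k \<in> - A"
    then have "d\<^sup>2 \<le> (real k - l)\<^sup>2"
      using far d by (metis ComplD abs_le_square_iff abs_of_pos)
    then show "0 \<le> f k"
      using d poisson_weight_nonneg[OF l, of k] by (simp add: f_def)
  qed (simp add: sums_unique[OF f_sums])
  moreover have "- poisson_weight l k \<le> f k" for k
    using poisson_weight_nonneg[OF l, of k] by (simp add: f_def algebra_simps)
  ultimately show ?thesis
    using sum_mono[of A "\<lambda>k. - poisson_weight l k" f] by (simp add: sum_negf)
qed

lemma tendsto_Chebyshev_bound_0:
  fixes l c :: "nat \<Rightarrow> real"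
  assumes c: "filterlim c at_top sequentially" and lc: "(\<lambda>n. l n / c n) \<longlonglongrightarrow> \<mu>" and "x \<noteq> \<mu>"
  shows "(\<lambda>n. l n / (l n - x * c n)\<^sup>2) \<longlonglongrightarrow> 0"
proof -
  have "(\<lambda>n. l n / c n * inverse ((l n / c n - x)\<^sup>2) * inverse (c n))
          \<longlonglongrightarrow> \<mu> * inverse ((\<mu> - x)\<^sup>2) * 0"
    using assms by (intro tendsto_intros tendsto_inverse_0_at_top) auto
  moreover have "eventually (\<lambda>n. l n / c n * inverse ((l n / c n - x)\<^sup>2) * inverse (c n)
                                  = l n / (l n - x * c n)\<^sup>2) sequentially"
    using c[unfolded filterlim_at_top_dense, rule_format, of 0]
    by eventually_elim (simp add: field_simps power2_eq_square)
  ultimately show ?thesis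
    by (simp add: Lim_transform_eventually)
qed

lemma poisson_weight_concentration:
  fixes l c :: "nat \<Rightarrow> real"
  assumes l: "\<And>n. l n \<ge> 0" and c: "filterlim c at_top sequentially"
    and lc: "(\<lambda>n. l n / c n) \<longlonglongrightarrow> \<mu>"
  shows "x < \<mu> \<Longrightarrow> (\<lambda>n. \<Sum>k | real k \<le> x * c n. poisson_weight (l n) k) \<longlonglongrightarrow> 0"
    and "\<mu> < x \<Longrightarrow> (\<lambda>n. \<Sum>k | real k \<le> x * c n. poisson_weight (l n) k) \<longlonglongrightarrow> 1"
proof -
  let ?b = "\<lambda>n. l n / (l n - x * c n)\<^sup>2"
  have c_pos: "eventually (\<lambda>n. c n > 0) sequentially"
    using c by (simp add: filterlim_at_top_dense)
  show "(\<lambda>n. \<Sum>k | real k \<le> x * c n. poisson_weight (l n) k) \<longlonglongrightarrow> 0" if "x < \<mu>"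
  proof (rule tendsto_sandwich[OF _ _ tendsto_const tendsto_Chebyshev_bound_0[OF c lc]])
    show "eventually (\<lambda>n. 0 \<le> (\<Sum>k | real k \<le> x * c n. poisson_weight (l n) k)) sequentially"
      by (intro always_eventually allI sum_nonneg poisson_weight_nonneg l)
    have "eventually (\<lambda>n. l n / c n > x) sequentially"
      using lc that by (simp add: order_tendsto_iff)
    with c_pos show "eventually (\<lambda>n. (\<Sum>k | real k \<le> x * c n. poisson_weight (l n) k) \<le> ?b n) sequentially"
    proof eventually_elim
      case (elim n)
      then have "x * c n < l n"
        by (simp add: field_simps)
      then show ?case
        by (intro sum_poisson_weight_le_Chebyshev[of _ "l n - x * c n", simplified] l) auto
    qed
  qed (use that in simp)
  show "(\<lambda>n. \<Sum>k | real k \<le> x * c n. poisson_weight (l n) k) \<longlonglongrightarrow> 1" if "\<mu> < x"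
  proof (rule tendsto_sandwich[OF _ _ _ tendsto_const])
    show "(\<lambda>n. 1 - ?b n) \<longlonglongrightarrow> 1"
      using tendsto_diff[OF tendsto_const tendsto_Chebyshev_bound_0[OF c lc]] that by simp
    show "eventually (\<lambda>n. (\<Sum>k | real k \<le> x * c n. poisson_weight (l n) k) \<le> 1) sequentially"
      by (intro always_eventually allI sum_poisson_weight_le_1 l finite_nat_real_le)
    have "eventually (\<lambda>n. l n / c n < x) sequentially"
      using lc that by (simp add: order_tendsto_iff)
    with c_pos show "eventually (\<lambda>n. 1 - ?b n \<le> (\<Sum>k | real k \<le> x * c n. poisson_weight (l n) k)) sequentially"
    proof eventually_elim
      case (elim n)
      then have "l n < x * c n"
        by (simp add: field_simps)
      then show ?case
        using sum_poisson_weight_ge_Chebyshev[OF l, of "x * c n - l n" "{k. real k \<le> x * c n}"]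
        by (simp add: power2_commute)
    qed
  qed
qed

section \<open>Weak convergence of mixtures\<close>

lemma cdf_K_scaled_law:
  assumes nonneg: "\<And>k. K_prob V \<alpha> \<theta> n k \<ge> 0" and "c > 0"
  shows "cdf (K_scaled_law V \<alpha> \<theta> n c) x = (\<Sum>k | real k \<le> x * c. K_prob V \<alpha> \<theta> n k)"
proof -
  let ?M = "density (count_space UNIV) (\<lambda>k::nat. ennreal (K_prob V \<alpha> \<theta> n k))"
  have "(\<lambda>k. real k / c) -` {..x} \<inter> space ?M = {k. real k \<le> x * c}"
    using \<open>c > 0\<close> by (auto simp: field_simps)
  then have "cdf (K_scaled_law V \<alpha> \<theta> n c) x = measure ?M {k. real k \<le> x * c}"
    unfolding cdf_def K_scaled_law_def by (subst measure_distr) auto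
  also have "emeasure ?M {k. real k \<le> x * c} = ennreal (\<Sum>k | real k \<le> x * c. K_prob V \<alpha> \<theta> n k)"
    using nonneg by (simp add: emeasure_density nn_integral_count_space_indicator
        nn_integral_indicator_finite sum_nonneg)
  then have "measure ?M {k. real k \<le> x * c} = (\<Sum>k | real k \<le> x * c. K_prob V \<alpha> \<theta> n k)"
    using nonneg by (simp add: measure_def sum_nonneg)
  finally show ?thesis .
qed

lemma (in prob_space) AE_neq_if_isCont_cdf_distr:
  assumes "Y \<in> borel_measurable M" "isCont (cdf (distr M borel Y)) x"
  shows "AE \<omega> in M. Y \<omega> \<noteq> x"
proof -
  have "measure (distr M borel Y) {x} = 0"
    using assms finite_borel_measure.isCont_cdf[OF real_distribution.finite_borel_measure_M,
        OF real_distribution_distr] by simp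
  with assms(1) show ?thesis
    by (subst (asm) measure_distr) (auto simp: prob_eq_0 vimage_def)
qed

lemma (in prob_space) cdf_distr_eq_integral:
  assumes "Y \<in> borel_measurable M"
  shows "cdf (distr M borel Y) x = (\<integral>\<omega>. indicator {..x} (Y \<omega>) \<partial>M)"
proof -
  have "(\<integral>\<omega>. indicator {..x} (Y \<omega>) \<partial>M) = (\<integral>y. indicator {..x} y \<partial>distr M borel Y :: real)"
    using assms by (intro integral_distr[symmetric]) simp_all
  then show ?thesis
    by (simp add: cdf_def)
qed

text \<open>\<open>w n \<gamma>\<close> is the conditional law of \<open>K_n\<close> given the mixing variable \<open>\<gamma> \<sim> P\<close>.\<close>
lemma weak_conv_K_scaled_law_mixture:
  fixes P :: "'a measure" and w :: "nat \<Rightarrow> 'a \<Rightarrow> nat \<Rightarrow> real" and Y :: "'a \<Rightarrow> real"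
  assumes "prob_space P" and Y: "Y \<in> borel_measurable P"
    and w: "\<And>n k. (\<lambda>\<gamma>. w n \<gamma> k) \<in> borel_measurable P"
    and w_nonneg: "AE \<gamma> in P. \<forall>n k. 0 \<le> w n \<gamma> k"
    and w_sum_le_1: "AE \<gamma> in P. \<forall>n A. finite A \<longrightarrow> (\<Sum>k\<in>A. w n \<gamma> k) \<le> 1"
    and K: "\<And>n k. n \<ge> 1 \<Longrightarrow> K_prob V \<alpha> \<theta> n k = (\<integral>\<gamma>. w n \<gamma> k \<partial>P)"
    and c: "eventually (\<lambda>n. c n > 0) sequentially"
    and concentration: "\<And>x. AE \<gamma> in P. Y \<gamma> \<noteq> x \<longrightarrow>
          (\<lambda>n. \<Sum>k | real k \<le> x * c n. w n \<gamma> k) \<longlonglongrightarrow> indicator {..x} (Y \<gamma>)"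
  shows "weak_conv_m (\<lambda>n. K_scaled_law V \<alpha> \<theta> n (c n)) (distr P borel Y)"
  unfolding weak_conv_m_def weak_conv_def
proof (intro allI impI)
  interpret prob_space P by fact
  note [measurable] = Y w
  fix x assume "isCont (cdf (distr P borel Y)) x"
  with Y have "AE \<gamma> in P. Y \<gamma> \<noteq> x"
    by (rule AE_neq_if_isCont_cdf_distr)
  define s where "s n \<gamma> = (\<Sum>k | real k \<le> x * c n. w n \<gamma> k)" for n \<gamma>
  have int_w: "integrable P (\<lambda>\<gamma>. w n \<gamma> k)" for n k
  proof (rule integrable_const_bound[where B = 1])
    show "AE \<gamma> in P. norm (w n \<gamma> k) \<le> 1"
      using w_nonneg w_sum_le_1
    proof eventually_elim
      case (elim \<gamma>)
      then have "(\<Sum>i\<in>{k}. w n \<gamma> i) \<le> 1"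
        by blast
      with elim show ?case
        by simp
    qed
  qed simp
  have "(\<lambda>n. \<integral>\<gamma>. s n \<gamma> \<partial>P) \<longlonglongrightarrow> (\<integral>\<gamma>. indicator {..x} (Y \<gamma>) \<partial>P)"
  proof (rule integral_dominated_convergence[where w = "\<lambda>_. 1"])
    show "AE \<gamma> in P. norm (s n \<gamma>) \<le> 1" for n
      using w_nonneg w_sum_le_1 by eventually_elim (simp add: s_def sum_nonneg)
    show "AE \<gamma> in P. (\<lambda>n. s n \<gamma>) \<longlonglongrightarrow> indicator {..x} (Y \<gamma>)"
      using concentration[of x] \<open>AE \<gamma> in P. Y \<gamma> \<noteq> x\<close> by eventually_elim (simp add: s_def)
  qed (auto simp: s_def)
  also have "(\<integral>\<gamma>. indicator {..x} (Y \<gamma>) \<partial>P) = cdf (distr P borel Y) x"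
    using Y by (rule cdf_distr_eq_integral[symmetric])
  finally have "(\<lambda>n. \<integral>\<gamma>. s n \<gamma> \<partial>P) \<longlonglongrightarrow> cdf (distr P borel Y) x" .
  moreover have "eventually (\<lambda>n. (\<integral>\<gamma>. s n \<gamma> \<partial>P) = cdf (K_scaled_law V \<alpha> \<theta> n (c n)) x) sequentially"
    using eventually_ge_at_top[of 1] c
  proof eventually_elim
    case (elim n)
    have "K_prob V \<alpha> \<theta> n k \<ge> 0" for k
      unfolding K[OF \<open>n \<ge> 1\<close>] using w_nonneg by (auto intro: integral_nonneg_AE)
    then have "cdf (K_scaled_law V \<alpha> \<theta> n (c n)) x = (\<Sum>k | real k \<le> x * c n. \<integral>\<gamma>. w n \<gamma> k \<partial>P)"
      using elim by (simp add: cdf_K_scaled_law K)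
    then show ?case
      unfolding s_def by (simp add: int_w)
  qed
  ultimately show "(\<lambda>n. cdf (K_scaled_law V \<alpha> \<theta> n (c n)) x) \<longlonglongrightarrow> cdf (distr P borel Y) x"
    by (rule Lim_transform_eventually)
qed

section \<open>Asymptotics of rising factorials\<close>

lemma pochhammer_ratio_asymptotics:
  fixes a b :: real
  assumes "a > 0" "b > 0"
  shows "(\<lambda>n. pochhammer a n / pochhammer b n * real n powr (b - a)) \<longlonglongrightarrow> Gamma b / Gamma a"
proof -
  have "(\<lambda>n. Gamma_series' b n / Gamma_series' a n) \<longlonglongrightarrow> Gamma b / Gamma a"
    using Gamma_real_pos[OF \<open>a > 0\<close>] by (intro tendsto_divide Gamma_series'_LIMSEQ) simp
  moreover have "eventually (\<lambda>n. Gamma_series' b n / Gamma_series' a n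
      = pochhammer a n / pochhammer b n * real n powr (b - a)) sequentially"
    using eventually_gt_at_top[of 0]
  proof eventually_elim
    case (elim n)
    have "pochhammer a n > 0" "pochhammer b n > 0" "fact (n - 1) > (0::real)"
      using assms by (simp_all add: pochhammer_pos)
    then show ?case
      using elim by (simp add: Gamma_series'_def powr_def exp_diff field_simps)
  qed
  ultimately show ?thesis
    by (rule Lim_transform_eventually)
qed

lemma pochhammer_ratio_tendsto_0:
  fixes a b :: real
  assumes "0 < a" "a < b"
  shows "(\<lambda>n. pochhammer a n / pochhammer b n) \<longlonglongrightarrow> 0"
proof -
  have "(\<lambda>n. pochhammer a n / pochhammer b n * real n powr (b - a) * real n powr (a - b))
          \<longlonglongrightarrow> Gamma b / Gamma a * 0"
    using assms by (intro tendsto_mult pochhammer_ratio_asymptotics) (simp_all, real_asymp)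
  moreover have "eventually (\<lambda>n. pochhammer a n / pochhammer b n * real n powr (b - a) * real n powr (a - b)
      = pochhammer a n / pochhammer b n) sequentially"
    using eventually_gt_at_top[of 0] by eventually_elim (simp add: powr_add[symmetric])
  ultimately show ?thesis
    by (simp add: Lim_transform_eventually)
qed

lemma g_fun_nonneg: "\<theta> + \<alpha> > 0 \<Longrightarrow> \<theta> + 1 > 0 \<Longrightarrow> g_fun \<theta> \<alpha> n \<ge> 0"
  unfolding g_fun_def by (intro sum_nonneg divide_nonneg_nonneg pochhammer_nonneg) auto

lemma g_fun_asymptotics_pos:
  assumes "0 < \<alpha>" "\<alpha> < 1" "\<theta> + \<alpha> > 0"
  shows "(\<lambda>n. g_fun \<theta> \<alpha> n / real n powr \<alpha>) \<longlonglongrightarrow> Gamma (\<theta> + 1) / (\<alpha> * Gamma (\<theta> + \<alpha>))"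
proof -
  have \<theta>1: "\<theta> + 1 > 0"
    using assms by simp
  let ?r = "\<lambda>n. pochhammer (\<theta> + \<alpha>) n / pochhammer (\<theta> + 1) n * real n powr (1 - \<alpha>)"
  have "(\<lambda>n. (?r n * ((\<theta> + n) / n) - \<theta> / real n powr \<alpha>) / \<alpha>)
          \<longlonglongrightarrow> (Gamma (\<theta> + 1) / Gamma (\<theta> + \<alpha>) * 1 - 0) / \<alpha>"
    using pochhammer_ratio_asymptotics[of "\<theta> + \<alpha>" "\<theta> + 1"] assms
    by (intro tendsto_intros) (simp_all, real_asymp+)
  moreover have "eventually (\<lambda>n. (?r n * ((\<theta> + n) / n) - \<theta> / real n powr \<alpha>) / \<alpha>
      = g_fun \<theta> \<alpha> n / real n powr \<alpha>) sequentially"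
    using eventually_gt_at_top[of 0]
  proof eventually_elim
    case (elim n)
    have Q: "pochhammer (\<theta> + 1) n > 0"
      using \<theta>1 by (rule pochhammer_pos)
    then have g: "\<alpha> * g_fun \<theta> \<alpha> n = (\<theta> + n) * pochhammer (\<theta> + \<alpha>) n / pochhammer (\<theta> + 1) n - \<theta>"
      using g_fun_closed_form[OF \<theta>1, of \<alpha> n] by (simp add: field_simps)
    have "?r n * ((\<theta> + n) / n) - \<theta> / real n powr \<alpha>
        = ((\<theta> + n) * pochhammer (\<theta> + \<alpha>) n / pochhammer (\<theta> + 1) n - \<theta>) / real n powr \<alpha>"
      using elim Q by (simp add: powr_diff field_simps)
    then show ?case
      unfolding g[symmetric] using assms by simp
  qed
  ultimately have "(\<lambda>n. g_fun \<theta> \<alpha> n / real n powr \<alpha>)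
      \<longlonglongrightarrow> (Gamma (\<theta> + 1) / Gamma (\<theta> + \<alpha>) * 1 - 0) / \<alpha>"
    by (rule Lim_transform_eventually)
  then show ?thesis
    by (simp add: mult.commute)
qed

lemma g_fun_0_eq_sum:
  fixes \<theta> :: real
  assumes "\<theta> > 0"
  shows "g_fun \<theta> 0 n = \<theta> * (\<Sum>i<n. 1 / (\<theta> + real i))"
proof (induction n)
  case (Suc n)
  have "pochhammer \<theta> n * (\<theta> + n) = \<theta> * pochhammer (\<theta> + 1) n"
    by (metis pochhammer_Suc pochhammer_rec)
  moreover have "pochhammer (\<theta> + 1) n > 0"
    using assms by (intro pochhammer_pos) simp
  ultimately have "pochhammer \<theta> n / pochhammer (\<theta> + 1) n = \<theta> / (\<theta> + n)"
    using assms by (simp add: field_simps)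
  with Suc show ?case
    by (simp add: g_fun_Suc algebra_simps)
qed simp

lemma ln_diff_le_sum_inverse:
  fixes \<theta> :: real
  assumes "\<theta> > 0"
  shows "ln (\<theta> + n) - ln \<theta> \<le> (\<Sum>i<n. 1 / (\<theta> + real i))"
proof (induction n)
  case (Suc n)
  have "ln ((\<theta> + Suc n) / (\<theta> + n)) \<le> (\<theta> + Suc n) / (\<theta> + n) - 1"
    using assms by (intro ln_le_minus_one) simp
  also have "\<dots> = 1 / (\<theta> + n)"
    using assms by (simp add: field_simps)
  finally have "ln (\<theta> + Suc n) - ln (\<theta> + n) \<le> 1 / (\<theta> + n)"
    using assms by (simp add: ln_div)
  with Suc show ?case
    by simp
qed simp

lemma sum_inverse_le_ln_diff:
  fixes \<theta> :: real
  assumes "\<theta> > 0"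
  shows "(\<Sum>i<Suc n. 1 / (\<theta> + real i)) \<le> 1 / \<theta> + ln (\<theta> + n) - ln \<theta>"
proof (induction n)
  case (Suc n)
  have "ln ((\<theta> + n) / (\<theta> + Suc n)) \<le> (\<theta> + n) / (\<theta> + Suc n) - 1"
    using assms by (intro ln_le_minus_one) simp
  also have "\<dots> = - (1 / (\<theta> + Suc n))"
    using assms by (simp add: field_simps)
  finally have "1 / (\<theta> + Suc n) \<le> ln (\<theta> + Suc n) - ln (\<theta> + n)"
    using assms by (simp add: ln_div)
  with Suc show ?case
    by simp
qed simp

lemma g_fun_asymptotics_0:
  fixes \<theta> :: real
  assumes "\<theta> > 0"
  shows "(\<lambda>n. g_fun \<theta> 0 n / ln n) \<longlonglongrightarrow> \<theta>"
proof -
  let ?H = "\<lambda>n. \<Sum>i<n. 1 / (\<theta> + real i)"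
  have "(\<lambda>n. ?H n / ln n) \<longlonglongrightarrow> 1"
  proof (rule tendsto_sandwich)
    show "eventually (\<lambda>n. (ln (\<theta> + n) - ln \<theta>) / ln n \<le> ?H n / ln n) sequentially"
      using eventually_gt_at_top[of 1]
      by eventually_elim (intro divide_right_mono ln_diff_le_sum_inverse assms, simp)
    show "eventually (\<lambda>n. ?H n / ln n \<le> (1 / \<theta> + ln (\<theta> + (n - 1)) - ln \<theta>) / ln n) sequentially"
      using eventually_gt_at_top[of 1]
    proof eventually_elim
      case (elim n)
      then obtain m where "n = Suc m"
        by (cases n) auto
      with elim show ?case
        using sum_inverse_le_ln_diff[OF assms, of m] by (intro divide_right_mono) simp_all
    qed
  qed (use assms in real_asymp)+
  then have "(\<lambda>n. \<theta> * (?H n / ln n)) \<longlonglongrightarrow> \<theta> * 1"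
    by (intro tendsto_mult tendsto_const)
  then show ?thesis
    by (simp add: g_fun_0_eq_sum[OF assms])
qed

section \<open>Mixture representations\<close>

lemma K_prob_IBP_mixture:
  assumes "\<theta> + 1 > 0" and "n \<ge> 1" and V: "\<And>k. V n k = (\<integral>\<gamma>. V_IBP \<theta> \<alpha> n k \<gamma> \<partial>P)"
  shows "K_prob V \<alpha> \<theta> n k = (\<integral>\<gamma>. poisson_weight (\<gamma> * g_fun \<theta> \<alpha> n) k \<partial>P)"
proof -
  obtain m where m: "n = Suc m"
    using \<open>n \<ge> 1\<close> by (cases n) auto
  have "pochhammer (\<theta> + 1) m > 0"
    using assms(1) by (rule pochhammer_pos)
  then have "V_IBP \<theta> \<alpha> n k \<gamma> * (g_fun \<theta> \<alpha> n * pochhammer (\<theta> + 1) m) ^ k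
      = poisson_weight (\<gamma> * g_fun \<theta> \<alpha> n) k" for \<gamma>
    by (simp add: V_IBP_def poisson_weight_def m power_mult_distrib power_divide field_simps)
  moreover have "feature_mass \<theta> \<alpha> n = g_fun \<theta> \<alpha> n * pochhammer (\<theta> + 1) m"
    using feature_mass_eq_g_fun[OF assms(1)] m by simp
  then have "K_prob V \<alpha> \<theta> n k
      = (\<integral>\<gamma>. V_IBP \<theta> \<alpha> n k \<gamma> \<partial>P) * (g_fun \<theta> \<alpha> n * pochhammer (\<theta> + 1) m) ^ k"
    by (simp add: K_prob_eq_feature_mass V)
  ultimately show ?thesis
    by (simp add: integral_mult_left_zero[symmetric] del: integral_mult_left_zero)
qed

lemma sums_pmf_integral:
  fixes M :: "nat pmf" and f :: "nat \<Rightarrow> real"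
  assumes bounded: "\<And>N. \<bar>f N\<bar> \<le> B"
  shows "(\<lambda>N. f N * pmf M N) sums (\<integral>N. f N \<partial>measure_pmf M)"
proof -
  have "integrable (count_space UNIV) (\<lambda>N. pmf M N * f N)"
  proof (rule Bochner_Integration.integrable_bound[where f = "\<lambda>N. B * pmf M N"])
    show "AE N in count_space UNIV. norm (pmf M N * f N) \<le> norm (B * pmf M N)"
    proof (rule AE_I2)
      fix N
      have "\<bar>f N\<bar> \<le> \<bar>B\<bar>"
        using bounded[of N] by linarith
      then show "norm (pmf M N * f N) \<le> norm (B * pmf M N)"
        by (simp add: abs_mult mult.commute mult_right_mono)
    qed
  qed (simp_all add: integrable_pmf)
  moreover have "(\<integral>N. f N \<partial>measure_pmf M) = (\<integral>N. pmf M N * f N \<partial>count_space UNIV)"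
    unfolding measure_pmf_eq_density by (subst integral_density) auto
  ultimately show ?thesis
    using sums_integral_count_space_nat by (simp add: mult.commute)
qed

lemma pochhammer_mono:
  fixes a b :: real
  assumes "0 \<le> a" "a \<le> b"
  shows "pochhammer a n \<le> pochhammer b n"
  unfolding pochhammer_prod using assms by (intro prod_mono) auto

lemma feature_mass_pos:
  assumes "\<alpha> < 1" "\<theta> + \<alpha> > 0" "n \<ge> 1"
  shows "feature_mass \<theta> \<alpha> n > 0"
  unfolding feature_mass_def using assms
  by (intro sum_pos2[where i = 1]) (auto intro!: mult_nonneg_nonneg mult_pos_pos pochhammer_nonneg pochhammer_pos)

lemma V_BB_feature_mass_eq_binomial:
  fixes n :: nat
  assumes "\<alpha> < 0" "\<theta> + \<alpha> > 0"
  defines "p \<equiv> 1 - pochhammer (\<theta> + \<alpha>) n / pochhammer \<theta> n"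
  shows "V_BB \<theta> \<alpha> n k N * feature_mass \<theta> \<alpha> n ^ k = pmf (binomial_pmf N p) k"
proof -
  define T where "T = pochhammer \<theta> n"
  define R where "R = pochhammer (\<theta> + \<alpha>) n"
  define S where "S = feature_mass \<theta> \<alpha> n"
  have R_T: "0 < R" "R \<le> T"
    unfolding R_def T_def using assms by (simp_all add: pochhammer_pos pochhammer_mono)
  have "- \<alpha> * S = T - R"
    unfolding S_def T_def R_def by (rule feature_mass_closed_form)
  then have "- \<alpha> / R * S * (R / T) = (T - R) / T"
    using R_T by simp
  then have p: "0 \<le> p" "p \<le> 1" "1 - p = R / T" "p = - \<alpha> / R * S * (R / T)"
    using R_T by (simp_all add: p_def R_def[symmetric] T_def[symmetric] diff_divide_distrib)
  show ?thesis
  proof (cases "k \<le> N")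
    case True
    have "(R / T) ^ N = (R / T) ^ k * (R / T) ^ (N - k)"
      using True by (simp add: power_add[symmetric])
    then have "(- \<alpha> / R) ^ k * (R / T) ^ N * S ^ k = (- \<alpha> / R * S * (R / T)) ^ k * (R / T) ^ (N - k)"
      by (simp only: power_mult_distrib mult_ac)
    also have "\<dots> = p ^ k * (1 - p) ^ (N - k)"
      by (simp only: p(4)[symmetric]) (simp only: p(3)[symmetric])
    finally show ?thesis
      using True p by (simp add: V_BB_def T_def[symmetric] R_def[symmetric] S_def[symmetric])
  qed (use p in \<open>simp add: V_BB_def\<close>)
qed

lemma K_prob_Beta_Bernoulli_mixture:
  assumes "\<alpha> < 0" "\<theta> + \<alpha> > 0" "n \<ge> 1" and V: "\<And>k. V n k = (\<Sum>N. V_BB \<theta> \<alpha> n k N * pmf PN N)"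
  defines "p \<equiv> 1 - pochhammer (\<theta> + \<alpha>) n / pochhammer \<theta> n"
  shows "K_prob V \<alpha> \<theta> n k = (\<integral>N. pmf (binomial_pmf N p) k \<partial>measure_pmf PN)"
proof -
  define S where "S = feature_mass \<theta> \<alpha> n"
  have "S > 0"
    unfolding S_def using assms by (intro feature_mass_pos) auto
  have "(\<lambda>N. pmf (binomial_pmf N p) k * pmf PN N / S ^ k)
          sums ((\<integral>N. pmf (binomial_pmf N p) k \<partial>measure_pmf PN) / S ^ k)"
    by (intro sums_divide sums_pmf_integral[where B = 1]) (simp add: pmf_le_1)
  moreover have "pmf (binomial_pmf N p) k * pmf PN N / S ^ k = V_BB \<theta> \<alpha> n k N * pmf PN N" for N
    using \<open>S > 0\<close> by (simp add: S_def p_def flip: V_BB_feature_mass_eq_binomial[OF assms(1,2)])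
  ultimately have "(\<lambda>N. V_BB \<theta> \<alpha> n k N * pmf PN N)
          sums ((\<integral>N. pmf (binomial_pmf N p) k \<partial>measure_pmf PN) / S ^ k)"
    by simp
  then show ?thesis
    using \<open>S > 0\<close> by (simp add: K_prob_eq_feature_mass V S_def[symmetric] sums_unique[symmetric])
qed

lemma binomial_pmf_cdf_tendsto:
  assumes "\<And>n. 0 \<le> p n" "\<And>n. p n \<le> 1" "p \<longlonglongrightarrow> 1"
  shows "(\<lambda>n. \<Sum>k | real k \<le> x. pmf (binomial_pmf N (p n)) k) \<longlonglongrightarrow> indicator {..x} (real N)"
proof (cases "real N \<le> x")
  case True
  then have "(\<Sum>k | real k \<le> x. pmf (binomial_pmf N (p n)) k) = 1" for n
    using assms by (intro sum_pmf_eq_1) (auto simp: set_pmf_binomial_eq)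
  with True show ?thesis
    by simp
next
  case False
  have "(\<lambda>n. pmf (binomial_pmf N (p n)) k) \<longlonglongrightarrow> 0" if "real k \<le> x" for k
  proof -
    have "(\<lambda>n. real (N choose k) * p n ^ k * (1 - p n) ^ (N - k))
            \<longlonglongrightarrow> real (N choose k) * 1 ^ k * (1 - 1) ^ (N - k)"
      by (intro tendsto_intros assms(3))
    moreover have "k < N"
      using that False by linarith
    ultimately show ?thesis
      using assms(1,2) by (simp add: zero_power)
  qed
  then have "(\<lambda>n. \<Sum>k | real k \<le> x. pmf (binomial_pmf N (p n)) k) \<longlonglongrightarrow> 0"
    by (intro tendsto_null_sum) auto
  with False show ?thesis
    by simp
qed

theorem K_scaled_law_weak_conv_Beta_Bernoulli:
  assumes "\<alpha> < 0" "\<theta> + \<alpha> > 0"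
    and V: "\<And>n k. n \<ge> 1 \<Longrightarrow> V n k = (\<Sum>N. V_BB \<theta> \<alpha> n k N * pmf PN N)"
  shows "weak_conv_m (\<lambda>n. K_scaled_law V \<alpha> \<theta> n 1) (distr (measure_pmf PN) borel real)"
proof -
  define p where "p n = 1 - pochhammer (\<theta> + \<alpha>) n / pochhammer \<theta> n" for n
  have p: "0 \<le> p n" "p n \<le> 1" for n
  proof -
    have "0 < pochhammer (\<theta> + \<alpha>) n" "pochhammer (\<theta> + \<alpha>) n \<le> pochhammer \<theta> n"
      using assms by (simp_all add: pochhammer_pos pochhammer_mono)
    then show "0 \<le> p n" "p n \<le> 1"
      unfolding p_def by simp_all
  qed
  have "p \<longlonglongrightarrow> 1 - 0"
    unfolding p_def using assms by (intro tendsto_diff tendsto_const pochhammer_ratio_tendsto_0) auto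
  then have "p \<longlonglongrightarrow> 1"
    by simp
  show ?thesis
  proof (rule weak_conv_K_scaled_law_mixture[where w = "\<lambda>n N k. pmf (binomial_pmf N (p n)) k"])
    show "AE N in measure_pmf PN. \<forall>n A. finite A \<longrightarrow> (\<Sum>k\<in>A. pmf (binomial_pmf N (p n)) k) \<le> 1"
      by (simp add: measure_measure_pmf_finite[symmetric])
    show "K_prob V \<alpha> \<theta> n k = (\<integral>N. pmf (binomial_pmf N (p n)) k \<partial>measure_pmf PN)" if "n \<ge> 1" for n k
      using assms that unfolding p_def by (intro K_prob_Beta_Bernoulli_mixture V) auto
    show "AE N in measure_pmf PN. real N \<noteq> x \<longrightarrow>
        (\<lambda>n. \<Sum>k | real k \<le> x * 1. pmf (binomial_pmf N (p n)) k) \<longlonglongrightarrow> indicator {..x} (real N)" for x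
      using binomial_pmf_cdf_tendsto[OF p \<open>p \<longlonglongrightarrow> 1\<close>] by simp
  qed (simp_all add: prob_space_measure_pmf)
qed

theorem K_scaled_law_weak_conv_IBP:
  assumes "prob_space P" "sets P = sets borel" "emeasure P {0<..} = 1"
    and "\<theta> + \<alpha> > 0" "\<theta> + 1 > 0"
    and V: "\<And>n k. n \<ge> 1 \<Longrightarrow> V n k = (\<integral>\<gamma>. V_IBP \<theta> \<alpha> n k \<gamma> \<partial>P)"
    and c: "filterlim c at_top sequentially" and g: "(\<lambda>n. g_fun \<theta> \<alpha> n / c n) \<longlonglongrightarrow> L"
  shows "weak_conv_m (\<lambda>n. K_scaled_law V \<alpha> \<theta> n (c n)) (distr P borel (\<lambda>\<gamma>. \<gamma> * L))"
proof -
  interpret prob_space P by fact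
  have measurable_P: "measurable P = measurable borel"
    by (intro ext measurable_cong_sets) (simp_all add: assms(2))
  have "AE \<gamma> in P. \<gamma> \<in> {0<..}"
    using assms(2,3) by (intro prob_eq_1[THEN iffD1]) (simp_all add: emeasure_eq_measure)
  then have pos: "AE \<gamma> in P. \<forall>n. \<gamma> * g_fun \<theta> \<alpha> n \<ge> 0"
    using g_fun_nonneg assms(4,5) by (auto elim!: eventually_mono)
  show ?thesis
  proof (rule weak_conv_K_scaled_law_mixture[where w = "\<lambda>n \<gamma> k. poisson_weight (\<gamma> * g_fun \<theta> \<alpha> n) k"])
    show "(\<lambda>\<gamma>. \<gamma> * L) \<in> borel_measurable P"
      "(\<lambda>\<gamma>. poisson_weight (\<gamma> * g_fun \<theta> \<alpha> n) k) \<in> borel_measurable P" for n k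
      unfolding measurable_P poisson_weight_def by measurable
    show "AE \<gamma> in P. \<forall>n k. 0 \<le> poisson_weight (\<gamma> * g_fun \<theta> \<alpha> n) k"
      using pos by eventually_elim (simp add: poisson_weight_nonneg)
    show "AE \<gamma> in P. \<forall>n A. finite A \<longrightarrow> (\<Sum>k\<in>A. poisson_weight (\<gamma> * g_fun \<theta> \<alpha> n) k) \<le> 1"
      using pos by eventually_elim (simp add: sum_poisson_weight_le_1)
    show "K_prob V \<alpha> \<theta> n k = (\<integral>\<gamma>. poisson_weight (\<gamma> * g_fun \<theta> \<alpha> n) k \<partial>P)" if "n \<ge> 1" for n k
      using assms(5) that by (rule K_prob_IBP_mixture) (rule V[OF that])
    show "eventually (\<lambda>n. c n > 0) sequentially"
      using c by (simp add: filterlim_at_top_dense)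
    show "AE \<gamma> in P. \<gamma> * L \<noteq> x \<longrightarrow> (\<lambda>n. \<Sum>k | real k \<le> x * c n. poisson_weight (\<gamma> * g_fun \<theta> \<alpha> n) k)
        \<longlonglongrightarrow> indicator {..x} (\<gamma> * L)" for x
      using pos
    proof eventually_elim
      case (elim \<gamma>)
      have "(\<lambda>n. \<gamma> * g_fun \<theta> \<alpha> n / c n) \<longlonglongrightarrow> \<gamma> * L"
        using tendsto_mult[OF tendsto_const g, of \<gamma>] by simp
      from poisson_weight_concentration[OF _ c this] elim show ?case
        by (cases "\<gamma> * L < x") auto
    qed
  qed fact
qed

theorem proposition2:
  fixes \<alpha> \<theta> :: real and V :: "nat \<Rightarrow> nat \<Rightarrow> real"
    and PN :: "nat pmf" and P\<gamma> :: "real measure"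
  assumes "\<alpha> < 1" and "\<theta> > - \<alpha>"
  shows
   "(\<alpha> < 0 \<and> pmf PN 0 = 0 \<and>
       (\<forall>n\<ge>1. \<forall>k. V n k = (\<Sum>N. V_BB \<theta> \<alpha> n k N * pmf PN N))
     \<longrightarrow> weak_conv_m (\<lambda>n. K_scaled_law V \<alpha> \<theta> n 1) (distr (measure_pmf PN) borel real))
  \<and> (\<alpha> = 0 \<and> prob_space P\<gamma> \<and> sets P\<gamma> = sets borel \<and> emeasure P\<gamma> {0<..} = 1 \<and>
       (\<forall>n\<ge>1. \<forall>k. V n k = (\<integral>\<gamma>. V_IBP \<theta> \<alpha> n k \<gamma> \<partial>P\<gamma>))
     \<longrightarrow> weak_conv_m (\<lambda>n. K_scaled_law V \<alpha> \<theta> n (ln (real n)))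
           (distr P\<gamma> borel (\<lambda>\<gamma>. \<gamma> * \<theta>)))
  \<and> (0 < \<alpha> \<and> prob_space P\<gamma> \<and> sets P\<gamma> = sets borel \<and> emeasure P\<gamma> {0<..} = 1 \<and>
       (\<forall>n\<ge>1. \<forall>k. V n k = (\<integral>\<gamma>. V_IBP \<theta> \<alpha> n k \<gamma> \<partial>P\<gamma>))
     \<longrightarrow> weak_conv_m (\<lambda>n. K_scaled_law V \<alpha> \<theta> n (real n powr \<alpha>))
           (distr P\<gamma> borel (\<lambda>\<gamma>. \<gamma> * Gamma (\<theta> + 1) / (\<alpha> * Gamma (\<theta> + \<alpha>)))))"
proof (intro conjI impI, goal_cases Beta_Bernoulli IBP_0 IBP_pos)
  case Beta_Bernoulli
  with assms show ?case
    by (intro K_scaled_law_weak_conv_Beta_Bernoulli) auto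
next
  case IBP_0
  then have "(\<lambda>n. g_fun \<theta> \<alpha> n / ln (real n)) \<longlonglongrightarrow> \<theta>"
    using assms g_fun_asymptotics_0[of \<theta>] by simp
  moreover have "filterlim (\<lambda>n. ln (real n)) at_top sequentially"
    by real_asymp
  ultimately show ?case
    using IBP_0 assms by (intro K_scaled_law_weak_conv_IBP) auto
next
  case IBP_pos
  then have "(\<lambda>n. g_fun \<theta> \<alpha> n / real n powr \<alpha>) \<longlonglongrightarrow> Gamma (\<theta> + 1) / (\<alpha> * Gamma (\<theta> + \<alpha>))"
    using assms by (intro g_fun_asymptotics_pos) auto
  moreover have "filterlim (\<lambda>n. real n powr \<alpha>) at_top sequentially"
    using IBP_pos by real_asymp
  ultimately have "weak_conv_m (\<lambda>n. K_scaled_law V \<alpha> \<theta> n (real n powr \<alpha>))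
      (distr P\<gamma> borel (\<lambda>\<gamma>. \<gamma> * (Gamma (\<theta> + 1) / (\<alpha> * Gamma (\<theta> + \<alpha>)))))"
    using IBP_pos assms by (intro K_scaled_law_weak_conv_IBP) auto
  then show ?case
    by simp
qed

end
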